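(* The Perfect Split Heuristic $h$ is admissible on $\mathcal G_{\mathcal X,\mathcal Y}$: for every OR node $o$, $h(o)\le f(o)$, and for every AND node $a$, $h(a)\le f(a)$, where $f$ denotes the true value.
   Context: Let $x_1,\dots,x_N\in\{0,1\}^F$ be a binary dataset $\mathcal X$ with labels $\mathcal Y\in\{0,1\}^N$, $[N]=\{1,\dots,N\}$. For $\mathcal I\subseteq[N]$, $f\in[F]$, $k\in\{0,1\}$ let $\mathcal I|_{f=k}=\{i\in\mathcal I:(x_i)_f=k\}$, $c^k(\mathcal I)=|\{i\in\mathcal I:y_i=k\}|$, $\mathcal V(\mathcal I)=\{f:\mathcal I|_{f=0}\neq\emptyset\text{ and }\mathcal I|_{f=1}\neq\emptyset\}$. Fix $\rho^1,\rho^0>0$, $\alpha\in(0,1)$, $\beta\ge0$. Let $\ell_{\rm leaf}(c^1,c^0)=B(c^1+\rho^1,c^0+\rho^0)/B(\rho^1,\rho^0)$ ($B$ the Beta function), $p_{\rm split}(d)=\alpha(1+d)^{-\beta}$, $p_{\rm leaf}(d,\mathcal I)=1$ if $\mathcal V(\mathcal I)=\emptyset$ and $1-p_{\rm split}(d)$ otherwise, $p_{\rm inner}(d,\mathcal I)=0$ if $\mathcal V(\mathcal I)=\emptyset$ and $p_{\rm split}(d)/|\mathcal V(\mathcal I)|$ otherwise; $-\log0=+\infty$. $\mathcal G_{\mathcal X,\mathcal Y}$: for nonempty $\mathcal I\subseteq[N]$ and $d\in\{0,\dots,F\}$, an OR node $o_{\mathcal I,d}$ with a terminal child $t_{\mathcal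 I,d}$ via an edge of cost $-\log p_{\rm leaf}(d,\mathcal I)-\log\ell_{\rm leaf}(c^1(\mathcal I),c^0(\mathcal I))$; for $d<F$ and each $f\in\mathcal V(\mathcal I)$ an AND child $a_{\mathcal I,d,f}$ via an edge of cost $-\log p_{\rm inner}(d,\mathcal I)$, and $a_{\mathcal I,d,f}$ has cost-$0$ edges to $o_{\mathcal I|_{f=0},d+1}$ and $o_{\mathcal I|_{f=1},d+1}$; the root is $r=o_{[N],0}$ and only nodes reachable from $r$ are kept. A partial solution rooted at an OR node $u$ is a set $\mathcal S$ of nodes containing $u$, all reachable from $u$ inside $\mathcal S$, such that every AND node of $\mathcal S$ has both children in $\mathcal S$ and every OR node of $\mathcal S$ has exactly one child in $\mathcal S$; its cost is the sum of the costs of edges $v\to w$ with $v,w\in\mathcal S$. The true value $f(u)$ of an OR node $u$ is the minimum cost of a partial solution rooted at $u$; for an AND node $a$ with children $o_0,o_1$, $f(a)=f(o_0)+f(o_1)$. Perfect Split Heuristic: $h(t)=0$ for terminal nodes; $h(o_{\mathcal I,d})=-\max\{\log\ell_{\rm leaf}(c^1(\mathcal I),c^0(\mathcal I)),\ \log p_{\rm split}(d)+\log\ell_{\rm leaf}(c^1(\mathcal I),0)+\log\ell_{\rm leaf}(0,c^0(\mathcal I))\}$; $h(a_{\mathcal I,d,f})=h(o_{\mathcal I|_{f=0},d+1})+h(o_{\mathcal I|_{f=1},d+1})$. *)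

theory Defs
  imports "HOL-Analysis.Analysis"
begin

text \<open>Problem data: N samples indexed by 1..N, F binary features indexed by 1..F.
  xv i f = True iff (x_i)_f = 1; yv i = True iff y_i = 1. Labels/feature values
  k in {0,1} are encoded as booleans (False = 0, True = 1).\<close>

record dtprob =
  nS :: nat
  nF :: nat
  xv :: "nat \<Rightarrow> nat \<Rightarrow> bool"
  yv :: "nat \<Rightarrow> bool"
  rho1 :: real
  rho0 :: real
  alph :: real
  bet :: real

definition restr :: "dtprob \<Rightarrow> nat set \<Rightarrow> nat \<Rightarrow> bool \<Rightarrow> nat set" where
  "restr P I f k = {i \<in> I. xv P i f = k}"

definition cnt :: "dtprob \<Rightarrow> bool \<Rightarrow> nat set \<Rightarrow> nat" where
  "cnt P k I = card {i \<in> I. yv P i = k}"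

definition splitvars :: "dtprob \<Rightarrow> nat set \<Rightarrow> nat set" where
  "splitvars P I = {f \<in> {1..nF P}. restr P I f False \<noteq> {} \<and> restr P I f True \<noteq> {}}"

definition l_leaf :: "dtprob \<Rightarrow> nat \<Rightarrow> nat \<Rightarrow> real" where
  "l_leaf P c1 c0 = Beta (real c1 + rho1 P) (real c0 + rho0 P) / Beta (rho1 P) (rho0 P)"

definition p_split :: "dtprob \<Rightarrow> nat \<Rightarrow> real" where
  "p_split P d = alph P * (1 + real d) powr (- bet P)"

definition p_leaf :: "dtprob \<Rightarrow> nat \<Rightarrow> nat set \<Rightarrow> real" where
  "p_leaf P d I = (if splitvars P I = {} then 1 else 1 - p_split P d)"

definition p_inner :: "dtprob \<Rightarrow> nat \<Rightarrow> nat set \<Rightarrow> real" where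
  "p_inner P d I = (if splitvars P I = {} then 0 else p_split P d / real (card (splitvars P I)))"

datatype node = OrN "nat set" nat | TermN "nat set" nat | AndN "nat set" nat nat

definition raw_edges :: "dtprob \<Rightarrow> (node \<times> node) set" where
  "raw_edges P =
     {(OrN I d, TermN I d) | I d. I \<noteq> {} \<and> I \<subseteq> {1..nS P} \<and> d \<le> nF P}
   \<union> {(OrN I d, AndN I d f) | I d f. I \<noteq> {} \<and> I \<subseteq> {1..nS P} \<and> d < nF P \<and> f \<in> splitvars P I}
   \<union> {(AndN I d f, OrN (restr P I f k) (Suc d)) | I d f k.
        I \<noteq> {} \<and> I \<subseteq> {1..nS P} \<and> d < nF P \<and> f \<in> splitvars P I}"

definition root :: "dtprob \<Rightarrow> node" where
  "root P = OrN {1..nS P} 0"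

text \<open>Nodes of G: those reachable from the root (the root exists only if [N] is nonempty).\<close>
definition gnodes :: "dtprob \<Rightarrow> node set" where
  "gnodes P = {v. {1..nS P} \<noteq> {} \<and> (root P, v) \<in> (raw_edges P)\<^sup>*}"

definition gedges :: "dtprob \<Rightarrow> (node \<times> node) set" where
  "gedges P = {(v, w) \<in> raw_edges P. v \<in> gnodes P \<and> w \<in> gnodes P}"

fun is_or :: "node \<Rightarrow> bool" where
  "is_or (OrN _ _) = True" | "is_or _ = False"

fun is_and :: "node \<Rightarrow> bool" where
  "is_and (AndN _ _ _) = True" | "is_and _ = False"

fun ecost :: "dtprob \<Rightarrow> node \<Rightarrow> node \<Rightarrow> real" where
  "ecost P (OrN I d) (TermN _ _) =
     - ln (p_leaf P d I) - ln (l_leaf P (cnt P True I) (cnt P False I))"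
| "ecost P (OrN I d) (AndN _ _ _) = - ln (p_inner P d I)"
| "ecost P _ _ = 0"

definition partial_solution :: "dtprob \<Rightarrow> node \<Rightarrow> node set \<Rightarrow> bool" where
  "partial_solution P u S \<longleftrightarrow>
     S \<subseteq> gnodes P \<and> u \<in> S \<and>
     (\<forall>v\<in>S. (u, v) \<in> (gedges P \<inter> (S \<times> S))\<^sup>*) \<and>
     (\<forall>a\<in>S. is_and a \<longrightarrow> (\<forall>w. (a, w) \<in> gedges P \<longrightarrow> w \<in> S)) \<and>
     (\<forall>v\<in>S. is_or v \<longrightarrow> (\<exists>!w. (v, w) \<in> gedges P \<and> w \<in> S))"

definition sol_cost :: "dtprob \<Rightarrow> node set \<Rightarrow> real" where
  "sol_cost P S = (\<Sum>e \<in> gedges P \<inter> (S \<times> S). ecost P (fst e) (snd e))"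

definition fval_or :: "dtprob \<Rightarrow> node \<Rightarrow> real" where
  "fval_or P u = Min (sol_cost P ` {S. partial_solution P u S})"

fun fval :: "dtprob \<Rightarrow> node \<Rightarrow> real" where
  "fval P (OrN I d) = fval_or P (OrN I d)"
| "fval P (AndN I d f) =
     fval_or P (OrN (restr P I f False) (Suc d)) + fval_or P (OrN (restr P I f True) (Suc d))"
| "fval P (TermN _ _) = 0"

definition h_or :: "dtprob \<Rightarrow> nat set \<Rightarrow> nat \<Rightarrow> real" where
  "h_or P I d = - max (ln (l_leaf P (cnt P True I) (cnt P False I)))
                      (ln (p_split P d) + ln (l_leaf P (cnt P True I) 0) + ln (l_leaf P 0 (cnt P False I)))"

fun psh :: "dtprob \<Rightarrow> node \<Rightarrow> real" where
  "psh P (TermN _ _) = 0"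
| "psh P (OrN I d) = h_or P I d"
| "psh P (AndN I d f) = h_or P (restr P I f False) (Suc d) + h_or P (restr P I f True) (Suc d)"

end

theory Submission
  imports Defs
begin

(*
  Let G(I) = -log l(c1(I), 0) - log l(0, c0(I)) (perfect_split_cost) be the cost of the two pure
  leaves that a perfect split of the samples I by label would produce. The Beta recursion gives
  l(a, b) <= l(a, 0) l(0, b) and supermultiplicativity of l(-, 0) and l(0, -), so G(I) is at most
  the leaf cost of I and G is superadditive along splits. As all edge costs are nonnegative,
  induction on the depth shows that every partial solution rooted at o_{I,d} costs at least G(I).
  Such a solution either ends in the leaf t_{I,d}, costing at least -log l(c1, c0), or splits,
  paying at least -log p_split(d) for the split plus at least G(I) below it; h(o_{I,d}) is the
  smaller of these two bounds.
*)

lemma Beta_pos_real: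
  fixes x y :: real
  assumes "x > 0" "y > 0"
  shows "Beta x y > 0"
  using assms by (simp add: Beta_def)

lemma Beta_add_nat_left:
  fixes x y :: real
  assumes "x > 0" "y > 0"
  shows "Beta (x + real n) y = Beta x y * (\<Prod>j<n. (x + real j) / (x + y + real j))"
proof (induction n)
  case (Suc n)
  have "x + real n \<notin> \<int>\<^sub>\<le>\<^sub>0" using assms by auto
  from Beta_plus1_left[OF this, of y]
  have "Beta (x + real (Suc n)) y = (x + real n) / (x + y + real n) * Beta (x + real n) y"
    using assms by (simp add: field_simps)
  with Suc.IH show ?case by simp
qed simp

lemma Beta_add_nat_right:
  fixes x y :: real
  assumes "x > 0" "y > 0"
  shows "Beta x (y + real n) = Beta x y * (\<Prod>j<n. (y + real j) / (x + y + real j))"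
  using Beta_add_nat_left[OF assms(2,1), of n] by (simp add: Beta_commute add_ac)

lemma Beta_supermult_left:
  fixes x y :: real
  assumes "x > 0" "y > 0"
  shows "Beta (x + real a) y * Beta (x + real b) y \<le> Beta (x + real (a + b)) y * Beta x y"
proof -
  let ?B = "Beta (x + real a) y * Beta x y"
  have "(\<Prod>j<b. (x + real j) / (x + y + real j)) \<le> (\<Prod>j<b. (x + a + real j) / (x + a + y + real j))"
    using assms by (intro prod_mono) (auto simp: field_simps)
  then have "?B * (\<Prod>j<b. (x + real j) / (x + y + real j))
      \<le> ?B * (\<Prod>j<b. (x + a + real j) / (x + a + y + real j))"
    using Beta_pos_real[OF assms] Beta_pos_real[of "x + a" y] assms by (simp add: mult_left_mono)
  then show ?thesis
    using Beta_add_nat_left[OF assms, of b] Beta_add_nat_left[of "x + a" y b] assms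
    by (simp add: add_ac mult_ac)
qed

lemma Beta_submult:
  fixes x y r :: real
  assumes "x > 0" "y > 0" "r \<ge> 0"
  shows "Beta (x + r) (y + real b) * Beta x y \<le> Beta (x + r) y * Beta x (y + real b)"
proof -
  have "(\<Prod>j<b. (y + real j) / (x + r + y + real j)) \<le> (\<Prod>j<b. (y + real j) / (x + y + real j))"
    using assms by (intro prod_mono) (auto intro!: divide_left_mono)
  then show ?thesis
    using Beta_add_nat_right[OF assms(1,2), of b] Beta_add_nat_right[of "x + r" y b] assms
      Beta_pos_real[of "x + r" y] Beta_pos_real[OF assms(1,2)]
    by (simp add: mult_left_mono)
qed

lemma cnt_restr_add:
  assumes "finite I"
  shows "cnt P k I = cnt P k (restr P I f False) + cnt P k (restr P I f True)"
proof -
  have "{i \<in> I. yv P i = k}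
      = {i \<in> restr P I f False. yv P i = k} \<union> {i \<in> restr P I f True. yv P i = k}"
    by (auto simp: restr_def)
  then show ?thesis
    using assms unfolding cnt_def by (simp add: card_Un_disjoint restr_def disjoint_iff)
qed

definition perfect_split_cost :: "dtprob \<Rightarrow> nat set \<Rightarrow> real" where
  "perfect_split_cost P I = - ln (l_leaf P (cnt P True I) 0) - ln (l_leaf P 0 (cnt P False I))"

lemma h_or_eq_min:
  "h_or P I d = min (- ln (l_leaf P (cnt P True I) (cnt P False I)))
                    (- ln (p_split P d) + perfect_split_cost P I)"
  by (simp add: h_or_def perfect_split_cost_def)

locale tree_prior =
  fixes P :: dtprob
  assumes rho1_pos: "rho1 P > 0" and rho0_pos: "rho0 P > 0"
    and alph_pos: "0 < alph P" and alph_less_1: "alph P < 1" and bet_nonneg: "bet P \<ge> 0"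
begin

lemma p_split_pos: "p_split P d > 0"
  using alph_pos by (simp add: p_split_def)

lemma p_split_less_1: "p_split P d < 1"
proof -
  have "(1 + real d) powr (- bet P) \<le> (1 + real d) powr 0"
    using bet_nonneg by (intro powr_mono) auto
  then have "alph P * (1 + real d) powr (- bet P) \<le> alph P"
    using alph_pos by (simp add: mult_left_le_one_le)
  then show ?thesis using alph_less_1 by (simp add: p_split_def)
qed

lemma p_leaf_pos_le_1: "0 < p_leaf P d I" "p_leaf P d I \<le> 1"
  using p_split_pos[of d] p_split_less_1[of d] by (simp_all add: p_leaf_def)

lemma p_inner_pos_le_p_split:
  assumes "splitvars P I \<noteq> {}"
  shows "0 < p_inner P d I" "p_inner P d I \<le> p_split P d"
proof -
  have "card (splitvars P I) \<ge> 1"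
    using assms by (simp add: Suc_le_eq card_gt_0_iff splitvars_def)
  then show "0 < p_inner P d I" "p_inner P d I \<le> p_split P d"
    using assms p_split_pos[of d] by (simp_all add: p_inner_def divide_le_eq)
qed

lemma l_leaf_pos: "l_leaf P a b > 0"
  using rho1_pos rho0_pos by (simp add: l_leaf_def Beta_pos_real)

lemma l_leaf_le_1: "l_leaf P a b \<le> 1"
  using rho1_pos rho0_pos Beta_real_mono[of "rho1 P" "real a + rho1 P" "rho0 P" "real b + rho0 P"]
    Beta_pos_real[of "rho1 P" "rho0 P"]
  by (simp add: l_leaf_def)

lemma l_leaf_le_mult: "l_leaf P a b \<le> l_leaf P a 0 * l_leaf P 0 b"
proof -
  define B0 where "B0 = Beta (rho1 P) (rho0 P)"
  have "B0 > 0" using rho1_pos rho0_pos by (simp add: B0_def Beta_pos_real)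
  moreover have "Beta (rho1 P + real a) (rho0 P + real b) * B0
      \<le> Beta (rho1 P + real a) (rho0 P) * Beta (rho1 P) (rho0 P + real b)"
    using Beta_submult[of "rho1 P" "rho0 P" "real a" b] rho1_pos rho0_pos by (simp add: B0_def)
  ultimately show ?thesis by (simp add: l_leaf_def B0_def[symmetric] field_simps add.commute)
qed

lemma l_leaf_supermult_True: "l_leaf P a 0 * l_leaf P a' 0 \<le> l_leaf P (a + a') 0"
proof -
  define B0 where "B0 = Beta (rho1 P) (rho0 P)"
  have "B0 > 0" using rho1_pos rho0_pos by (simp add: B0_def Beta_pos_real)
  moreover have "Beta (rho1 P + real a) (rho0 P) * Beta (rho1 P + real a') (rho0 P)
      \<le> Beta (rho1 P + real (a + a')) (rho0 P) * B0"
    using Beta_supermult_left[of "rho1 P" "rho0 P" a a'] rho1_pos rho0_pos by (simp add: B0_def)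
  ultimately show ?thesis by (simp add: l_leaf_def B0_def[symmetric] field_simps add.commute)
qed

lemma l_leaf_supermult_False: "l_leaf P 0 b * l_leaf P 0 b' \<le> l_leaf P 0 (b + b')"
proof -
  define B0 where "B0 = Beta (rho1 P) (rho0 P)"
  have "B0 > 0" using rho1_pos rho0_pos by (simp add: B0_def Beta_pos_real)
  moreover have "Beta (rho1 P) (rho0 P + real b) * Beta (rho1 P) (rho0 P + real b')
      \<le> Beta (rho1 P) (rho0 P + real (b + b')) * B0"
    using Beta_supermult_left[of "rho0 P" "rho1 P" b b'] rho1_pos rho0_pos
    by (simp add: B0_def Beta_commute)
  ultimately show ?thesis by (simp add: l_leaf_def B0_def[symmetric] field_simps add.commute)
qed

lemma ln_l_leaf_mult_le:
  assumes "l_leaf P a b * l_leaf P a' b' \<le> l_leaf P a'' b''"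
  shows "ln (l_leaf P a b) + ln (l_leaf P a' b') \<le> ln (l_leaf P a'' b'')"
proof -
  have "ln (l_leaf P a b * l_leaf P a' b') \<le> ln (l_leaf P a'' b'')"
    using assms l_leaf_pos by (subst ln_le_cancel_iff) auto
  then show ?thesis by (simp add: ln_mult_pos l_leaf_pos)
qed

lemma perfect_split_cost_le_leaf:
  "perfect_split_cost P I \<le> - ln (l_leaf P (cnt P True I) (cnt P False I))"
proof -
  have "ln (l_leaf P (cnt P True I) (cnt P False I))
      \<le> ln (l_leaf P (cnt P True I) 0 * l_leaf P 0 (cnt P False I))"
    using l_leaf_le_mult l_leaf_pos by (subst ln_le_cancel_iff) auto
  then show ?thesis by (simp add: perfect_split_cost_def ln_mult_pos l_leaf_pos)
qed

lemma perfect_split_cost_superadditive: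
  assumes "finite I"
  shows "perfect_split_cost P I
    \<le> perfect_split_cost P (restr P I f False) + perfect_split_cost P (restr P I f True)"
  unfolding perfect_split_cost_def cnt_restr_add[OF assms, where f = f]
  using ln_l_leaf_mult_le[OF l_leaf_supermult_True] ln_l_leaf_mult_le[OF l_leaf_supermult_False]
  by (smt (verit))

end

fun wf_node :: "dtprob \<Rightarrow> node \<Rightarrow> bool" where
  "wf_node P (OrN I d) \<longleftrightarrow> I \<noteq> {} \<and> I \<subseteq> {1..nS P} \<and> d \<le> nF P"
| "wf_node P (TermN I d) \<longleftrightarrow> I \<noteq> {} \<and> I \<subseteq> {1..nS P} \<and> d \<le> nF P"
| "wf_node P (AndN I d f) \<longleftrightarrow> I \<noteq> {} \<and> I \<subseteq> {1..nS P} \<and> d < nF P \<and> f \<in> splitvars P I"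

fun node_samples :: "node \<Rightarrow> nat set" where
  "node_samples (OrN I _) = I" | "node_samples (TermN I _) = I" | "node_samples (AndN I _ _) = I"

fun node_depth :: "node \<Rightarrow> nat" where
  "node_depth (OrN _ d) = d" | "node_depth (TermN _ d) = d" | "node_depth (AndN _ d _) = d"

lemma restr_subset: "restr P I f k \<subseteq> I"
  by (auto simp: restr_def)

lemma restr_nonempty: "f \<in> splitvars P I \<Longrightarrow> restr P I f k \<noteq> {}"
  by (cases k) (auto simp: splitvars_def)

lemma raw_edges_target_wf: "(v, w) \<in> raw_edges P \<Longrightarrow> wf_node P w"
  unfolding raw_edges_def using restr_nonempty restr_subset by fastforce

lemma raw_edges_samples_depth:
  "(v, w) \<in> raw_edges P \<Longrightarrow> node_samples w \<subseteq> node_samples v \<and> node_depth v \<le> node_depth w"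
  unfolding raw_edges_def by (auto simp: restr_def)

lemma gnodes_wf:
  assumes "v \<in> gnodes P"
  shows "wf_node P v"
proof -
  have "(root P, v) \<in> (raw_edges P)\<^sup>*" and "{1..nS P} \<noteq> {}"
    using assms by (auto simp: gnodes_def)
  then show ?thesis
    by (cases rule: rtranclE) (auto simp: root_def dest: raw_edges_target_wf)
qed

lemma gnodes_samples_nonempty: "v \<in> gnodes P \<Longrightarrow> node_samples v \<noteq> {}"
  by (cases v) (auto dest: gnodes_wf)

lemma gnodes_finite_samples:
  assumes "v \<in> gnodes P"
  shows "finite (node_samples v)"
  using gnodes_wf[OF assms] by (cases v) (auto intro: finite_subset)

lemma gnodes_raw_edges_closed: "v \<in> gnodes P \<Longrightarrow> (v, w) \<in> raw_edges P \<Longrightarrow> w \<in> gnodes P"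
  by (auto simp: gnodes_def)

lemma gedges_of_raw_edges: "v \<in> gnodes P \<Longrightarrow> (v, w) \<in> raw_edges P \<Longrightarrow> (v, w) \<in> gedges P"
  using gnodes_raw_edges_closed by (auto simp: gedges_def)

lemma gedges_AndN_child:
  assumes "AndN I d f \<in> gnodes P"
  shows "(AndN I d f, OrN (restr P I f k) (Suc d)) \<in> gedges P"
  using assms gnodes_wf[OF assms] by (intro gedges_of_raw_edges) (auto simp: raw_edges_def)

lemma gedges_rtrancl_samples_depth:
  "(v, w) \<in> (gedges P)\<^sup>* \<Longrightarrow> node_samples w \<subseteq> node_samples v \<and> node_depth v \<le> node_depth w"
proof (induction rule: rtrancl_induct)
  case (step w w')
  then show ?case using raw_edges_samples_depth[of w w' P] by (force simp: gedges_def)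
qed simp

lemma finite_gnodes: "finite (gnodes P)"
proof -
  let ?A = "Pow {1..nS P} \<times> {..nF P}"
  let ?N = "case_prod OrN ` ?A \<union> case_prod TermN ` ?A
      \<union> (\<lambda>(I, d, f). AndN I d f) ` (Pow {1..nS P} \<times> {..nF P} \<times> {1..nF P})"
  have "v \<in> ?N" if "wf_node P v" for v
  proof (cases v)
    case (AndN I d f)
    then show ?thesis using that
      by (auto simp: splitvars_def intro!: rev_image_eqI[of "(I, d, f)"])
  qed (use that in \<open>auto intro: rev_image_eqI\<close>)
  then have "gnodes P \<subseteq> ?N" using gnodes_wf by blast
  moreover have "finite ?N" by simp
  ultimately show ?thesis by (rule finite_subset)
qed

lemma partial_solution_subtree:
  assumes ps: "partial_solution P u S" and "v \<in> S"
  shows "partial_solution P v {x \<in> S. (v, x) \<in> (gedges P \<inter> S \<times> S)\<^sup>*}"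
proof -
  let ?R = "gedges P \<inter> S \<times> S"
  let ?S = "{x \<in> S. (v, x) \<in> ?R\<^sup>*}"
  have step: "w \<in> ?S" if "x \<in> ?S" "(x, w) \<in> gedges P" "w \<in> S" for x w
    using that by (auto intro: rtrancl_into_rtrancl)
  have reach: "(v, x) \<in> (gedges P \<inter> ?S \<times> ?S)\<^sup>*" if "(v, x) \<in> ?R\<^sup>*" for x
    using that
  proof (induction rule: rtrancl_induct)
    case (step y z)
    then have "(y, z) \<in> gedges P \<inter> ?S \<times> ?S"
      using \<open>v \<in> S\<close> by (auto intro: rtrancl_into_rtrancl)
    with step.IH show ?case by (rule rtrancl_into_rtrancl)
  qed simp
  have "\<forall>a\<in>?S. is_and a \<longrightarrow> (\<forall>w. (a, w) \<in> gedges P \<longrightarrow> w \<in> ?S)"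
    using ps step unfolding partial_solution_def by blast
  moreover have "\<forall>x\<in>?S. is_or x \<longrightarrow> (\<exists>!w. (x, w) \<in> gedges P \<and> w \<in> ?S)"
  proof (intro ballI impI)
    fix x assume x: "x \<in> ?S" "is_or x"
    then have "\<exists>!w. (x, w) \<in> gedges P \<and> w \<in> S"
      using ps unfolding partial_solution_def by blast
    with step[OF x(1)] show "\<exists>!w. (x, w) \<in> gedges P \<and> w \<in> ?S" by blast
  qed
  moreover have "\<forall>x\<in>?S. (v, x) \<in> (gedges P \<inter> ?S \<times> ?S)\<^sup>*" using reach by blast
  moreover have "v \<in> ?S" using \<open>v \<in> S\<close> by simp
  moreover have "?S \<subseteq> gnodes P" using ps by (auto simp: partial_solution_def)
  ultimately show ?thesis unfolding partial_solution_def by blast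
qed

lemma partial_solution_root_gnodes: "partial_solution P u S \<Longrightarrow> u \<in> gnodes P"
  by (auto simp: partial_solution_def)

lemma finite_partial_solutions: "finite {S. partial_solution P u S}"
proof (rule finite_subset)
  show "{S. partial_solution P u S} \<subseteq> Pow (gnodes P)"
    by (auto simp: partial_solution_def)
qed (simp add: finite_gnodes)

lemma partial_solution_leaf:
  assumes u: "OrN I d \<in> gnodes P"
  shows "partial_solution P (OrN I d) {OrN I d, TermN I d}"
proof -
  have "(OrN I d, TermN I d) \<in> gedges P"
    using u gnodes_wf[OF u] by (intro gedges_of_raw_edges) (auto simp: raw_edges_def)
  moreover have "(OrN I d, OrN I d) \<notin> gedges P"
    by (auto simp: gedges_def raw_edges_def)
  ultimately show ?thesis
    using u by (auto simp: partial_solution_def gedges_def)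
qed

lemma fval_OrN_lower_bound:
  assumes "OrN I d \<in> gnodes P" and "\<And>S. partial_solution P (OrN I d) S \<Longrightarrow> c \<le> sol_cost P S"
  shows "c \<le> fval P (OrN I d)"
proof -
  have "sol_cost P ` {S. partial_solution P (OrN I d) S} \<noteq> {}"
    using partial_solution_leaf[OF assms(1)] by blast
  then show ?thesis
    using assms(2) finite_partial_solutions[of P "OrN I d"] by (simp add: fval_or_def Min_ge_iff)
qed

context tree_prior
begin

lemma ecost_nonneg:
  assumes "(v, w) \<in> raw_edges P"
  shows "0 \<le> ecost P v w"
proof -
  have "(\<exists>I d. v = OrN I d \<and> w = TermN I d)
      \<or> (\<exists>I d f. v = OrN I d \<and> w = AndN I d f \<and> f \<in> splitvars P I)
      \<or> (\<exists>I d f k. v = AndN I d f \<and> w = OrN (restr P I f k) (Suc d))"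
    using assms unfolding raw_edges_def by blast
  then show ?thesis
  proof (elim disjE exE conjE)
    fix I d assume "v = OrN I d" "w = TermN I d"
    moreover have "ln (p_leaf P d I) \<le> 0"
      using p_leaf_pos_le_1[of d I] by simp
    moreover have "ln (l_leaf P (cnt P True I) (cnt P False I)) \<le> 0"
      using l_leaf_pos l_leaf_le_1 by simp
    ultimately show ?thesis by simp
  next
    fix I d f assume "v = OrN I d" "w = AndN I d f" "f \<in> splitvars P I"
    moreover from this have "0 < p_inner P d I" "p_inner P d I \<le> 1"
      using p_inner_pos_le_p_split[of I d] p_split_less_1[of d] by fastforce+
    ultimately show ?thesis by simp
  qed simp
qed

lemma sol_cost_add_le:
  assumes "S \<subseteq> gnodes P" "(u, w) \<in> gedges P" "u \<in> S" "w \<in> S"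
    and "S0 \<union> S1 \<subseteq> S" "S0 \<inter> S1 = {}" "u \<notin> S0 \<union> S1"
  shows "ecost P u w + sol_cost P S0 + sol_cost P S1 \<le> sol_cost P S"
proof -
  let ?E = "\<lambda>T. gedges P \<inter> T \<times> T"
  let ?c = "\<lambda>e. ecost P (fst e) (snd e)"
  have fin: "finite (?E S)"
    using finite_subset[OF assms(1) finite_gnodes] by simp
  have sub: "insert (u, w) (?E S0 \<union> ?E S1) \<subseteq> ?E S"
    using assms(2-5) by blast
  have "ecost P u w + sol_cost P S0 + sol_cost P S1 = sum ?c (insert (u, w) (?E S0 \<union> ?E S1))"
    using assms(6,7) finite_subset[OF sub fin]
    by (simp add: sol_cost_def sum.union_disjoint disjoint_iff)
  also have "\<dots> \<le> sum ?c (?E S)"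
    using fin sub ecost_nonneg by (intro sum_mono2) (auto simp: gedges_def)
  finally show ?thesis by (simp add: sol_cost_def)
qed

lemma partial_solution_AndN_split:
  assumes ps: "partial_solution P (OrN I d) S" and a: "AndN I d f \<in> S"
    and e: "(OrN I d, AndN I d f) \<in> gedges P"
  obtains S0 S1 where
    "partial_solution P (OrN (restr P I f False) (Suc d)) S0"
    "partial_solution P (OrN (restr P I f True) (Suc d)) S1"
    "ecost P (OrN I d) (AndN I d f) + sol_cost P S0 + sol_cost P S1 \<le> sol_cost P S"
proof -
  let ?R = "gedges P \<inter> S \<times> S"
  define child where "child k = OrN (restr P I f k) (Suc d)" for k
  define sub where "sub k = {x \<in> S. (child k, x) \<in> ?R\<^sup>*}" for k
  have Sg: "S \<subseteq> gnodes P" and uS: "OrN I d \<in> S"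
    using ps by (auto simp: partial_solution_def)
  have "(AndN I d f, child k) \<in> gedges P" for k
    unfolding child_def using a Sg by (intro gedges_AndN_child) blast
  then have "child k \<in> S" for k
    using ps a unfolding partial_solution_def by auto
  then have ps_sub: "partial_solution P (child k) (sub k)" for k
    unfolding sub_def by (rule partial_solution_subtree[OF ps])
  have sub_bounds: "node_samples x \<subseteq> restr P I f k \<and> Suc d \<le> node_depth x" if "x \<in> sub k" for x k
  proof -
    have "(child k, x) \<in> (gedges P)\<^sup>*"
      using that rtrancl_mono[of ?R "gedges P"] unfolding sub_def by blast
    then show ?thesis using gedges_rtrancl_samples_depth unfolding child_def by fastforce
  qed
  have "sub False \<inter> sub True = {}"
  proof (rule equals0I)
    fix x assume "x \<in> sub False \<inter> sub True"
    then have "node_samples x \<subseteq> restr P I f False \<inter> restr P I f True" and "x \<in> gnodes P"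
      using sub_bounds Sg by (auto simp: sub_def)
    then show False using gnodes_samples_nonempty by (auto simp: restr_def)
  qed
  moreover have "OrN I d \<notin> sub False \<union> sub True"
    using sub_bounds by fastforce
  moreover have "sub False \<union> sub True \<subseteq> S"
    by (auto simp: sub_def)
  ultimately have "ecost P (OrN I d) (AndN I d f) + sol_cost P (sub False) + sol_cost P (sub True)
      \<le> sol_cost P S"
    using sol_cost_add_le[OF Sg e uS a] by blast
  with ps_sub show thesis using that unfolding child_def by blast
qed

lemma partial_solution_OrN_cases:
  assumes ps: "partial_solution P (OrN I d) S"
  obtains (leaf) "- ln (l_leaf P (cnt P True I) (cnt P False I)) \<le> sol_cost P S"
  | (split) f S0 S1 where "d < nF P" "f \<in> splitvars P I"
      "partial_solution P (OrN (restr P I f False) (Suc d)) S0"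
      "partial_solution P (OrN (restr P I f True) (Suc d)) S1"
      "- ln (p_split P d) + sol_cost P S0 + sol_cost P S1 \<le> sol_cost P S"
proof -
  have Sg: "S \<subseteq> gnodes P" and uS: "OrN I d \<in> S"
    using ps by (auto simp: partial_solution_def)
  obtain w where uw: "(OrN I d, w) \<in> gedges P" and wS: "w \<in> S"
    using ps uS unfolding partial_solution_def by fastforce
  then have "w = TermN I d \<or> (\<exists>f. w = AndN I d f \<and> d < nF P \<and> f \<in> splitvars P I)"
    unfolding gedges_def raw_edges_def by blast
  then show thesis
  proof (elim disjE exE conjE)
    assume "w = TermN I d"
    moreover have "ecost P (OrN I d) w \<le> sol_cost P S"
      using sol_cost_add_le[OF Sg uw uS wS, of "{}" "{}"] by (simp add: sol_cost_def)
    moreover have "ln (p_leaf P d I) \<le> 0"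
      using p_leaf_pos_le_1[of d I] by simp
    ultimately show thesis using leaf by simp
  next
    fix f assume w: "w = AndN I d f" and "d < nF P" and fV: "f \<in> splitvars P I"
    obtain S0 S1 where "partial_solution P (OrN (restr P I f False) (Suc d)) S0"
      "partial_solution P (OrN (restr P I f True) (Suc d)) S1"
      and cost: "ecost P (OrN I d) w + sol_cost P S0 + sol_cost P S1 \<le> sol_cost P S"
      using partial_solution_AndN_split[OF ps] uw wS w by blast
    moreover have "ln (p_inner P d I) \<le> ln (p_split P d)"
      using p_inner_pos_le_p_split[of I d] fV by fastforce
    ultimately show thesis using split \<open>d < nF P\<close> fV w by simp
  qed
qed

lemma perfect_split_cost_le_sol_cost:
  "partial_solution P (OrN I d) S \<Longrightarrow> perfect_split_cost P I \<le> sol_cost P S"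
proof (induction "nF P - d" arbitrary: I d S rule: less_induct)
  case less
  from less.prems show ?case
  proof (cases rule: partial_solution_OrN_cases)
    case leaf
    then show ?thesis using perfect_split_cost_le_leaf[of I] by linarith
  next
    case (split f S0 S1)
    have "finite I"
      using gnodes_finite_samples[OF partial_solution_root_gnodes[OF less.prems]] by simp
    moreover have "perfect_split_cost P (restr P I f False) \<le> sol_cost P S0"
      and "perfect_split_cost P (restr P I f True) \<le> sol_cost P S1"
      using less.hyps[of "Suc d"] split by auto
    moreover have "ln (p_split P d) \<le> 0"
      using p_split_pos[of d] p_split_less_1[of d] by simp
    ultimately show ?thesis
      using perfect_split_cost_superadditive[of I f] split(5) by linarith
  qed
qed

lemma h_or_le_sol_cost:
  assumes "partial_solution P (OrN I d) S"
  shows "h_or P I d \<le> sol_cost P S"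
  using assms
proof (cases rule: partial_solution_OrN_cases)
  case (split f S0 S1)
  have "finite I"
    using gnodes_finite_samples[OF partial_solution_root_gnodes[OF assms]] by simp
  then have "- ln (p_split P d) + perfect_split_cost P I \<le> sol_cost P S"
    using perfect_split_cost_superadditive[of I f] split
      perfect_split_cost_le_sol_cost[OF split(3)] perfect_split_cost_le_sol_cost[OF split(4)]
    by linarith
  then show ?thesis by (simp add: h_or_eq_min)
qed (simp add: h_or_eq_min)

lemma psh_le_fval_OrN:
  assumes "OrN I d \<in> gnodes P"
  shows "psh P (OrN I d) \<le> fval P (OrN I d)"
  using fval_OrN_lower_bound[OF assms h_or_le_sol_cost] by simp

lemma psh_le_fval_AndN:
  assumes "AndN I d f \<in> gnodes P"
  shows "psh P (AndN I d f) \<le> fval P (AndN I d f)"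
proof -
  have "OrN (restr P I f k) (Suc d) \<in> gnodes P" for k
    using gedges_AndN_child[OF assms] by (simp add: gedges_def)
  then show ?thesis
    using psh_le_fval_OrN by (simp add: add_mono)
qed

end

theorem corollary15:
  fixes P :: dtprob
  assumes "rho1 P > 0" and "rho0 P > 0" and "0 < alph P" and "alph P < 1" and "bet P \<ge> 0"
  shows "(\<forall>u \<in> gnodes P. is_or u \<longrightarrow> psh P u \<le> fval P u)
       \<and> (\<forall>a \<in> gnodes P. is_and a \<longrightarrow> psh P a \<le> fval P a)"
proof -
  interpret tree_prior P using assms by unfold_locales
  have "psh P u \<le> fval P u" if "u \<in> gnodes P" "is_or u" for u
    using that psh_le_fval_OrN by (cases u) auto
  moreover have "psh P a \<le> fval P a" if "a \<in> gnodes P" "is_and a" for a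
    using that psh_le_fval_AndN by (cases a) auto
  ultimately show ?thesis by blast
qed

end
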